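(* Let $\mathcal{E}$ be a metric space, $\lambda,\kappa,\mu\colon\mathcal{E}\to[0,\infty)$ continuous, $t\ge0$, $J$ an $\mathcal{E}$-valued càdlàg process and $J_n=J$ for all $n$. If $\{\phi_t(f): f\in\mathcal{S}([0,\infty);\mathcal{E})\}\subset\mathcal{R}(t)$, then $\mathcal{R}(t)$ is a closed interval.
   Context: $\mathcal{S}([0,\infty);\mathcal{E})$ is the set of step functions: càdlàg $f\colon[0,\infty)\to\mathcal{E}$ for which there exist $n\in\mathbb{N}$, $0=t_0<\dots<t_n<\infty$ and $\alpha_0,\dots,\alpha_n\in\mathcal{E}$ with $f=\alpha_i$ on $[t_i,t_{i+1})$ ($i<n$) and $f=\alpha_n$ on $[t_n,\infty)$. $\phi_t(f)=\int_0^t\lambda(f(s))\exp(-\kappa(f(s))\int_s^t\mu(f(r))\,dr)\,ds$. $\mathcal{R}(t)$ is the set of $\gamma\in[0,\infty)$ such that for every $\epsilon>0$ there is $N_\epsilon$ with $\mathbb{P}(\phi_t(J_n)\in(\gamma-\epsilon,\gamma+\epsilon))>0$ for all $n\ge N_\epsilon$. A closed interval here may be unbounded (e.g. $[a,\infty)$). *)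

theory Defs
  imports "HOL-Probability.Probability"
begin

text \<open>Functions on [0,\<infinity>) are represented as total functions real \<Rightarrow> 'e;
  values at negative arguments are irrelevant.\<close>

definition cadlag :: "(real \<Rightarrow> 'e::metric_space) \<Rightarrow> bool" where
  "cadlag f \<longleftrightarrow>
     (\<forall>s\<ge>0. (f \<longlongrightarrow> f s) (at_right s)) \<and>
     (\<forall>s>0. \<exists>l. (f \<longlongrightarrow> l) (at_left s))"

definition step_funs :: "(real \<Rightarrow> 'e::metric_space) set" where
  "step_funs = {f. cadlag f \<and>
     (\<exists>(n::nat) (ts::nat \<Rightarrow> real) (\<alpha>::nat \<Rightarrow> 'e).
        ts 0 = 0 \<and> (\<forall>i<n. ts i < ts (Suc i)) \<and>
        (\<forall>i<n. \<forall>s. ts i \<le> s \<and> s < ts (Suc i) \<longrightarrow> f s = \<alpha> i) \<and>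
        (\<forall>s. ts n \<le> s \<longrightarrow> f s = \<alpha> n))}"

definition phi :: "('e \<Rightarrow> real) \<Rightarrow> ('e \<Rightarrow> real) \<Rightarrow> ('e \<Rightarrow> real) \<Rightarrow> real
    \<Rightarrow> (real \<Rightarrow> 'e) \<Rightarrow> real" where
  "phi lam kap mu t f =
     integral {0..t} (\<lambda>s. lam (f s) * exp (- kap (f s) * integral {s..t} (\<lambda>r. mu (f r))))"

definition Rset :: "'w measure \<Rightarrow> ('e \<Rightarrow> real) \<Rightarrow> ('e \<Rightarrow> real) \<Rightarrow> ('e \<Rightarrow> real) \<Rightarrow> real
    \<Rightarrow> (nat \<Rightarrow> 'w \<Rightarrow> real \<Rightarrow> 'e) \<Rightarrow> real set" where
  "Rset M lam kap mu t Js = {\<gamma>. \<gamma> \<ge> 0 \<and>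
     (\<forall>\<epsilon>>0. \<exists>N. \<forall>n\<ge>N.
        measure M {\<omega> \<in> space M. phi lam kap mu t (Js n \<omega>) \<in> {\<gamma> - \<epsilon> <..< \<gamma> + \<epsilon>}} > 0)}"

text \<open>A (possibly unbounded) closed interval: nonempty, closed, convex subset of the reals.\<close>
definition closed_interval :: "real set \<Rightarrow> bool" where
  "closed_interval S \<longleftrightarrow> S \<noteq> {} \<and> closed S \<and> is_interval S"

end

theory Submission
  imports Defs
begin

text \<open>
  With \<open>X = phi t \<circ> J\<close>, the set \<open>R(t)\<close> consists of the nonnegative points of the support of the
  law of \<open>X\<close>. Since a cadlag process is jointly measurable and \<open>phi t\<close> is a Lebesgue integral
  along the path, \<open>X\<close> is a random variable, so this support is closed; it lies in the closure
  of the values of \<open>phi t\<close> on cadlag paths. Approximating a cadlag path from the right on a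
  dyadic grid gives step functions whose \<open>phi\<close>-values converge by dominated convergence, so
  those values lie in the closure of the values on step functions, which the hypothesis puts
  into the closed set \<open>R(t)\<close>. Hence \<open>R(t)\<close> is the closure of \<open>phi t\<close> on cadlag paths, and
  that image is connected: \<open>u \<mapsto> phi t (g on [0,u), then e)\<close> is continuous and joins
  \<open>phi t g\<close> to \<open>phi t (\<lambda>_. e)\<close>.
\<close>

lemma cadlag_compose:
  assumes "continuous_on UNIV u" "cadlag f"
  shows "cadlag (\<lambda>s. u (f s))"
  using assms unfolding cadlag_def
  by (metis continuous_on_eq_continuous_at isCont_tendsto_compose open_UNIV UNIV_I)

lemma cadlag_tendsto_from_right:
  assumes "cadlag f" "s \<ge> 0" "x \<longlonglongrightarrow> s" "\<And>n. x n \<ge> s"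
  shows "(\<lambda>n. f (x n)) \<longlonglongrightarrow> f s"
proof (rule continuous_within_tendsto_compose'[of s "{s..}" f x sequentially])
  show "continuous (at s within {s..}) f"
    using assms(1,2) by (simp add: cadlag_def continuous_within at_within_Ici_at_right)
qed (use assms(3,4) in auto)

lemma cadlag_locally_bounded:
  fixes f :: "real \<Rightarrow> 'e::metric_space"
  assumes "cadlag f" "s \<ge> 0"
  shows "\<exists>d>0. bounded (f ` ({0..} \<inter> ball s d))"
proof -
  obtain l where left: "\<forall>\<^sub>F y in at_left s. y \<ge> 0 \<longrightarrow> dist (f y) l < 1"
  proof (cases "s = 0")
    case True
    have "\<forall>\<^sub>F y in at_left s. y < 0" using True by (simp add: eventually_at_filter)
    then show ?thesis by (intro that[of "f s"]) (auto elim: eventually_mono)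
  next
    case False
    with assms have "s > 0" by simp
    with assms(1) obtain l where "(f \<longlongrightarrow> l) (at_left s)" unfolding cadlag_def by blast
    from tendstoD[OF this, of 1] show ?thesis by (intro that[of l]) (auto elim: eventually_mono)
  qed
  have "\<forall>\<^sub>F y in at_right s. dist (f y) (f s) < 1"
    using assms tendstoD[of f "f s" "at_right s" 1] unfolding cadlag_def by auto
  with left have "\<forall>\<^sub>F y in at s. y \<ge> 0 \<longrightarrow> f y \<in> ball l 1 \<union> ball (f s) 1"
    unfolding eventually_at_split by (auto elim!: eventually_mono simp: dist_commute)
  then obtain d where "d > 0"
    and d: "\<And>y. y \<noteq> s \<Longrightarrow> dist y s < d \<Longrightarrow> y \<ge> 0 \<Longrightarrow> f y \<in> ball l 1 \<union> ball (f s) 1"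
    unfolding eventually_at by auto
  have "f ` ({0..} \<inter> ball s d) \<subseteq> insert (f s) (ball l 1 \<union> ball (f s) 1)"
    using d by (smt (verit, best) IntE atLeast_iff dist_commute image_subset_iff insert_iff mem_ball)
  then have "bounded (f ` ({0..} \<inter> ball s d))"
    by (rule bounded_subset[rotated]) simp
  with \<open>d > 0\<close> show ?thesis by blast
qed

lemma cadlag_bounded:
  fixes f :: "real \<Rightarrow> 'e::metric_space"
  assumes "cadlag f"
  shows "bounded (f ` {0..T})"
proof -
  obtain d where d: "\<And>s. s \<in> {0..T} \<Longrightarrow> d s > 0 \<and> bounded (f ` ({0..} \<inter> ball s (d s)))"
    using cadlag_locally_bounded[OF assms] by (metis atLeastAtMost_iff)
  obtain K where K: "K \<subseteq> {0..T}" "finite K" "{0..T} \<subseteq> (\<Union>s\<in>K. ball s (d s))"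
    using compactE_image[OF compact_Icc, where C="{0..T}" and f="\<lambda>s. ball s (d s)"] d by force
  then have "f ` {0..T} \<subseteq> (\<Union>s\<in>K. f ` ({0..} \<inter> ball s (d s)))"
    by fastforce
  moreover have "bounded (\<Union>s\<in>K. f ` ({0..} \<inter> ball s (d s)))"
    using K d by blast
  ultimately show ?thesis by (rule bounded_subset[rotated])
qed

lemma cadlag_bound_on_Icc:
  fixes f :: "real \<Rightarrow> 'e::metric_space" and u :: "'e \<Rightarrow> real"
  assumes "continuous_on UNIV u" "cadlag f"
  obtains B where "\<And>s. s \<in> {0..T} \<Longrightarrow> \<bar>u (f s)\<bar> \<le> B"
  using cadlag_bounded[OF cadlag_compose[OF assms], of T] unfolding bounded_real by blast

lemma cadlag_floor_comp:
  fixes F :: "int \<Rightarrow> 'e::metric_space" and c :: real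
  assumes "c > 0"
  shows "cadlag (\<lambda>s. F \<lfloor>c * s\<rfloor>)"
  unfolding cadlag_def
proof (intro conjI allI impI)
  fix s :: real
  have "\<forall>\<^sub>F y in at_right s. \<lfloor>c * y\<rfloor> = \<lfloor>c * s\<rfloor>"
  proof -
    have "\<forall>\<^sub>F y in at_right s. c * y < of_int \<lfloor>c * s\<rfloor> + 1"
      by (rule order_tendstoD(2)[OF tendsto_mult_left[OF tendsto_ident_at]]) linarith
    moreover have "\<forall>\<^sub>F y in at_right s. s < y" by (rule eventually_at_right_less)
    ultimately show ?thesis
    proof eventually_elim
      case (elim y)
      moreover have "c * s < c * y" using elim assms by simp
      ultimately show ?case by (intro floor_unique) linarith+
    qed
  qed
  then show "((\<lambda>s. F \<lfloor>c * s\<rfloor>) \<longlongrightarrow> F \<lfloor>c * s\<rfloor>) (at_right s)"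
    by (intro tendsto_eventually) (auto elim: eventually_mono)
  have "\<forall>\<^sub>F y in at_left s. \<lfloor>c * y\<rfloor> = \<lceil>c * s\<rceil> - 1"
  proof -
    have "\<forall>\<^sub>F y in at_left s. of_int \<lceil>c * s\<rceil> - 1 < c * y"
      by (rule order_tendstoD(1)[OF tendsto_mult_left[OF tendsto_ident_at]]) linarith
    moreover have "\<forall>\<^sub>F y in at_left s. y < s" by (simp add: eventually_at_filter)
    ultimately show ?thesis
    proof eventually_elim
      case (elim y)
      moreover have "c * y < c * s" using elim assms by simp
      ultimately show ?case by (intro floor_unique) linarith+
    qed
  qed
  then show "\<exists>l. ((\<lambda>s. F \<lfloor>c * s\<rfloor>) \<longlongrightarrow> l) (at_left s)"
    by (intro exI tendsto_eventually) (auto elim: eventually_mono)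
qed

lemma floor_comp_in_step_funs:
  fixes F :: "int \<Rightarrow> 'e::metric_space" and c :: real
  assumes "c > 0" and const: "\<And>i. i \<ge> int N \<Longrightarrow> F i = F (int N)"
  shows "(\<lambda>s. F \<lfloor>c * s\<rfloor>) \<in> step_funs"
  unfolding step_funs_def
proof (intro CollectI conjI cadlag_floor_comp[OF \<open>c > 0\<close>] exI allI impI)
  show "real 0 / c = 0" by simp
  fix i assume "i < N"
  show "real i / c < real (Suc i) / c" using \<open>c > 0\<close> by (simp add: divide_strict_right_mono)
next
  fix i s assume "real i / c \<le> s \<and> s < real (Suc i) / c"
  then have "real i \<le> c * s" "c * s < real i + 1"
    using \<open>c > 0\<close> by (auto simp: field_simps)
  then have "\<lfloor>c * s\<rfloor> = int i" by (intro floor_unique) simp_all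
  then show "F \<lfloor>c * s\<rfloor> = F (int i)" by simp
next
  fix s assume "real N / c \<le> s"
  then have "int N \<le> \<lfloor>c * s\<rfloor>"
    using \<open>c > 0\<close> by (simp add: field_simps le_floor_iff)
  then show "F \<lfloor>c * s\<rfloor> = F (int N)" by (rule const)
qed

lemma cadlag_splice:
  assumes "cadlag g"
  shows "cadlag (\<lambda>s. if s < u then g s else e)"
  unfolding cadlag_def
proof (intro conjI allI impI)
  let ?h = "\<lambda>s. if s < u then g s else e"
  fix s :: real
  assume "s \<ge> 0"
  show "(?h \<longlongrightarrow> ?h s) (at_right s)"
  proof (cases "s < u")
    case True
    have "\<forall>\<^sub>F y in at_right s. g y = ?h y"
      using eventually_at_right_real[OF True] by eventually_elim auto
    moreover have "(g \<longlongrightarrow> g s) (at_right s)" using assms \<open>s \<ge> 0\<close> unfolding cadlag_def by auto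
    ultimately show ?thesis using True by (simp add: tendsto_cong)
  next
    case False
    have "\<forall>\<^sub>F y in at_right s. ?h y = ?h s"
      using eventually_at_right_less[of s] by eventually_elim (use False in auto)
    then show ?thesis by (rule tendsto_eventually)
  qed
next
  let ?h = "\<lambda>s. if s < u then g s else e"
  fix s :: real
  assume "s > 0"
  show "\<exists>l. (?h \<longlongrightarrow> l) (at_left s)"
  proof (cases "s \<le> u")
    case True
    obtain l where "(g \<longlongrightarrow> l) (at_left s)" using assms \<open>s > 0\<close> unfolding cadlag_def by auto
    moreover have "\<forall>\<^sub>F y in at_left s. g y = ?h y"
    proof -
      have "\<forall>\<^sub>F y in at_left s. y < s" by (simp add: eventually_at_filter)
      then show ?thesis by eventually_elim (use True in auto)
    qed
    ultimately show ?thesis by (auto simp: tendsto_cong)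
  next
    case False
    have "\<forall>\<^sub>F y in at_left s. ?h y = e"
    proof -
      have "u < s" using False by simp
      from eventually_at_left_real[OF this] show ?thesis by eventually_elim auto
    qed
    then show ?thesis by (blast intro: tendsto_eventually)
  qed
qed

definition dyadic_up :: "nat \<Rightarrow> real \<Rightarrow> real" where
  "dyadic_up m s = (of_int \<lfloor>2^m * s\<rfloor> + 1) / 2^m"

lemma dyadic_up_bounds: "s < dyadic_up m s" "dyadic_up m s \<le> s + 1 / 2^m"
proof -
  have "2^m * s < of_int \<lfloor>2^m * s\<rfloor> + 1" "of_int \<lfloor>2^m * s\<rfloor> \<le> 2^m * s"
    by linarith+
  then show "s < dyadic_up m s" "dyadic_up m s \<le> s + 1 / 2^m"
    unfolding dyadic_up_def by (simp_all add: field_simps)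
qed

lemma dyadic_up_tendsto: "(\<lambda>m. dyadic_up m s) \<longlonglongrightarrow> s"
proof (rule tendsto_sandwich[of "\<lambda>_. s" _ _ "\<lambda>m. s + 1 / 2^m"])
  show "(\<lambda>m. s + 1 / 2^m) \<longlonglongrightarrow> s"
    using tendsto_add[OF tendsto_const LIMSEQ_inverse_realpow_zero[of 2]]
    by (simp add: divide_inverse power_inverse)
qed (simp_all add: less_imp_le[OF dyadic_up_bounds(1)] dyadic_up_bounds(2))

lemma measurable_cadlag_process:
  fixes G :: "'a \<Rightarrow> real \<Rightarrow> 'e::metric_space"
  assumes cad: "\<And>\<omega>. \<omega> \<in> space N \<Longrightarrow> cadlag (G \<omega>)"
    and meas: "\<And>s. s \<ge> 0 \<Longrightarrow> (\<lambda>\<omega>. G \<omega> s) \<in> N \<rightarrow>\<^sub>M borel"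
  shows "(\<lambda>(\<omega>, s). G \<omega> (max 0 s)) \<in> N \<Otimes>\<^sub>M lborel \<rightarrow>\<^sub>M borel"
proof (rule borel_measurable_LIMSEQ_metric)
  \<comment> \<open>By right-continuity, \<open>G \<omega> s\<close> is the limit of its values at the dyadic points to the right of
    \<open>s\<close>, and these depend on \<open>s\<close> only through a countable index.\<close>
  fix m
  have "(\<lambda>x. G (fst x) ((real k + 1) / 2^m)) \<in> N \<Otimes>\<^sub>M lborel \<rightarrow>\<^sub>M borel" for k
    using meas[of "(real k + 1) / 2^m"] by measurable
  moreover have
    "(\<lambda>x. nat \<lfloor>(2::real)^m * max 0 (snd x)\<rfloor>) \<in> N \<Otimes>\<^sub>M lborel \<rightarrow>\<^sub>M count_space UNIV"
    by measurable
  ultimately have "(\<lambda>x. G (fst x) ((real (nat \<lfloor>(2::real)^m * max 0 (snd x)\<rfloor>) + 1) / 2^m))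
      \<in> N \<Otimes>\<^sub>M lborel \<rightarrow>\<^sub>M borel"
    by (rule measurable_compose_countable)
  then show "(\<lambda>(\<omega>, s). G \<omega> (dyadic_up m (max 0 s))) \<in> N \<Otimes>\<^sub>M lborel \<rightarrow>\<^sub>M borel"
    by (simp add: dyadic_up_def case_prod_beta')
next
  fix x :: "'a \<times> real"
  assume "x \<in> space (N \<Otimes>\<^sub>M lborel)"
  moreover obtain \<omega> s where x: "x = (\<omega>, s)" by fastforce
  ultimately have "cadlag (G \<omega>)" using cad by (simp add: space_pair_measure)
  from cadlag_tendsto_from_right[OF this _ dyadic_up_tendsto less_imp_le[OF dyadic_up_bounds(1)]]
  show "(\<lambda>m. case x of (\<omega>, s) \<Rightarrow> G \<omega> (dyadic_up m (max 0 s)))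
      \<longlonglongrightarrow> (case x of (\<omega>, s) \<Rightarrow> G \<omega> (max 0 s))"
    by (simp add: x)
qed

text \<open>Paths are only meaningful on \<open>[0,\<infinity>)\<close>; their values at negative times are arbitrary
  (and possibly non-measurable), hence the \<open>max 0\<close>.\<close>
lemma cadlag_borel_measurable:
  fixes f :: "real \<Rightarrow> 'e::metric_space"
  assumes "cadlag f"
  shows "(\<lambda>s. f (max 0 s)) \<in> lborel \<rightarrow>\<^sub>M borel"
proof -
  have "(\<lambda>(\<omega>::unit, s). f (max 0 s)) \<in> count_space UNIV \<Otimes>\<^sub>M lborel \<rightarrow>\<^sub>M borel"
    using measurable_cadlag_process[where G="\<lambda>_. f"] assms by simp
  from measurable_Pair2[OF this, of "()"] show ?thesis by simp
qed

lemma integral_eq_set_lebesgue_integral_nonneg: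
  fixes v :: "real \<Rightarrow> real"
  assumes nonneg: "\<And>s. s \<in> S \<Longrightarrow> v s \<ge> 0" and meas: "set_borel_measurable lborel S v"
  shows "integral S v = (LINT s:S|lborel. v s)"
proof (cases "set_integrable lborel S v")
  case True
  then show ?thesis by (simp add: set_borel_integral_eq_integral(2))
next
  case False
  have "\<not> v integrable_on S"
  proof
    assume "v integrable_on S"
    then have "set_integrable lebesgue S v"
      using nonnegative_absolutely_integrable_1 nonneg by blast
    with meas False show False
      unfolding set_integrable_def set_borel_measurable_def by (simp add: integrable_completion)
  qed
  with False show ?thesis
    by (simp add: not_integrable_integral set_lebesgue_integral_def not_integrable_integral_eq set_integrable_def)
qed

lemma borel_measurable_set_integral_Icc_param:
  fixes h :: "'a \<times> real \<Rightarrow> real"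
  assumes [measurable]: "h \<in> borel_measurable (N \<Otimes>\<^sub>M lborel)"
  shows "(\<lambda>(x, s). LINT r:{s..t}|lborel. h (x, r)) \<in> borel_measurable (N \<Otimes>\<^sub>M lborel)"
proof -
  have "(\<lambda>y. (if snd (fst y) \<le> snd y \<and> snd y \<le> t then 1 else 0) * h (fst (fst y), snd y))
      \<in> borel_measurable ((N \<Otimes>\<^sub>M lborel) \<Otimes>\<^sub>M lborel)"
    by measurable
  then have "(\<lambda>(xs, r). indicator {snd xs..t} r * h (fst xs, r))
      \<in> borel_measurable ((N \<Otimes>\<^sub>M lborel) \<Otimes>\<^sub>M lborel)"
    by (simp add: indicator_def case_prod_beta')
  from lborel.borel_measurable_lebesgue_integral[OF this] show ?thesis
    by (simp add: set_lebesgue_integral_def case_prod_beta')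
qed

lemma set_integral_bounded_convergence:
  fixes f :: "nat \<Rightarrow> 'a \<Rightarrow> real"
  assumes S: "S \<in> sets M" "emeasure M S < \<infinity>"
    and meas: "\<And>k. set_borel_measurable M S (f k)" "set_borel_measurable M S g"
    and bound: "\<And>k x. x \<in> S \<Longrightarrow> \<bar>f k x\<bar> \<le> B"
    and lim: "AE x in M. x \<in> S \<longrightarrow> (\<lambda>k. f k x) \<longlonglongrightarrow> g x"
  shows "(\<lambda>k. LINT x:S|M. f k x) \<longlonglongrightarrow> (LINT x:S|M. g x)"
  unfolding set_lebesgue_integral_def
proof (rule integral_dominated_convergence[where w="\<lambda>x. indicator S x * B"])
  show "integrable M (\<lambda>x. indicator S x * B)"
    using S by (intro integrable_mult_left integrable_real_indicator)
  show "AE x in M. (\<lambda>k. indicator S x *\<^sub>R f k x) \<longlonglongrightarrow> indicator S x *\<^sub>R g x"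
    using lim by eventually_elim (auto simp: indicator_def)
  show "AE x in M. norm (indicator S x *\<^sub>R f k x) \<le> indicator S x * B" for k
    using bound by (auto simp: indicator_def)
qed (use meas in \<open>auto simp: set_borel_measurable_def\<close>)

definition law_support :: "'a measure \<Rightarrow> ('a \<Rightarrow> real) \<Rightarrow> real set" where
  "law_support M X =
     {\<gamma>. \<forall>\<epsilon>>0. 0 < measure M {\<omega> \<in> space M. X \<omega> \<in> {\<gamma> - \<epsilon> <..< \<gamma> + \<epsilon>}}}"

lemma closed_law_support:
  assumes "finite_measure M" "X \<in> borel_measurable M"
  shows "closed (law_support M X)"
  unfolding closed_sequential_limits
proof (intro allI impI, elim conjE)
  fix x :: "nat \<Rightarrow> real" and l
  assume x: "\<forall>n. x n \<in> law_support M X" and "x \<longlonglongrightarrow> l"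
  have "0 < measure M {\<omega> \<in> space M. X \<omega> \<in> {l - \<epsilon> <..< l + \<epsilon>}}" if "\<epsilon> > 0" for \<epsilon>
  proof -
    from tendstoD[OF \<open>x \<longlonglongrightarrow> l\<close>, of "\<epsilon> / 2"] \<open>\<epsilon> > 0\<close>
    obtain n where n: "dist (x n) l < \<epsilon> / 2"
      by (auto simp: eventually_sequentially)
    have "0 < measure M {\<omega> \<in> space M. X \<omega> \<in> {x n - \<epsilon> / 2 <..< x n + \<epsilon> / 2}}"
      using x \<open>\<epsilon> > 0\<close> by (simp add: law_support_def)
    also have "\<dots> \<le> measure M {\<omega> \<in> space M. X \<omega> \<in> {l - \<epsilon> <..< l + \<epsilon>}}"
    proof (rule finite_measure.finite_measure_mono[OF assms(1)])
      have "l - \<epsilon> < x n - \<epsilon> / 2" "x n + \<epsilon> / 2 < l + \<epsilon>"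
        using n unfolding dist_real_def abs_less_iff by linarith+
      then show "{\<omega> \<in> space M. X \<omega> \<in> {x n - \<epsilon> / 2 <..< x n + \<epsilon> / 2}}
          \<subseteq> {\<omega> \<in> space M. X \<omega> \<in> {l - \<epsilon> <..< l + \<epsilon>}}"
        by auto
      show "{\<omega> \<in> space M. X \<omega> \<in> {l - \<epsilon> <..< l + \<epsilon>}} \<in> sets M"
        using assms(2) by measurable
    qed
    finally show ?thesis .
  qed
  then show "l \<in> law_support M X" by (simp add: law_support_def)
qed

lemma law_support_subset_closure_range: "law_support M X \<subseteq> closure (X ` space M)"
proof
  fix \<gamma> assume \<gamma>: "\<gamma> \<in> law_support M X"
  show "\<gamma> \<in> closure (X ` space M)"
    unfolding closure_approachable
  proof (intro allI impI)
    fix e :: real assume "e > 0"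
    with \<gamma> have "0 < measure M {\<omega> \<in> space M. X \<omega> \<in> {\<gamma> - e <..< \<gamma> + e}}"
      by (simp add: law_support_def)
    then obtain \<omega> where "\<omega> \<in> space M" "X \<omega> \<in> {\<gamma> - e <..< \<gamma> + e}"
      by (metis (no_types, lifting) Collect_empty_eq less_irrefl measure_empty)
    then show "\<exists>y\<in>X ` space M. dist y \<gamma> < e"
      by (intro bexI[where x="X \<omega>"]) (auto simp: dist_real_def abs_less_iff)
  qed
qed

lemma phi_cong:
  assumes "\<And>s. s \<in> {0..t} \<Longrightarrow> f s = g s"
  shows "phi lam kap mu t f = phi lam kap mu t g"
  unfolding phi_def
proof (rule integral_cong)
  fix s assume s: "s \<in> {0..t}"
  then have "integral {s..t} (\<lambda>r. mu (f r)) = integral {s..t} (\<lambda>r. mu (g r))"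
    using assms by (intro integral_cong) auto
  with assms[OF s] show "lam (f s) * exp (- kap (f s) * integral {s..t} (\<lambda>r. mu (f r))) =
      lam (g s) * exp (- kap (g s) * integral {s..t} (\<lambda>r. mu (g r)))"
    by simp
qed

text \<open>The Lebesgue-integral form of \<open>phi\<close>: it is what makes \<open>phi\<close> measurable in the sample
  point and amenable to dominated convergence.\<close>
definition phi_lebesgue :: "('e \<Rightarrow> real) \<Rightarrow> ('e \<Rightarrow> real) \<Rightarrow> ('e \<Rightarrow> real) \<Rightarrow> real
    \<Rightarrow> (real \<Rightarrow> 'e) \<Rightarrow> real" where
  "phi_lebesgue lam kap mu t f =
     (LINT s:{0..t}|lborel. lam (f s) * exp (- kap (f s) * (LINT r:{s..t}|lborel. mu (f r))))"

lemma borel_measurable_phi_integrand_pair: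
  fixes F :: "'a \<Rightarrow> real \<Rightarrow> 'e::topological_space" and lam kap mu :: "'e \<Rightarrow> real"
  assumes F: "(\<lambda>(\<omega>, s). F \<omega> s) \<in> N \<Otimes>\<^sub>M lborel \<rightarrow>\<^sub>M borel"
    and [measurable]: "lam \<in> borel_measurable borel" "kap \<in> borel_measurable borel" "mu \<in> borel_measurable borel"
  shows "(\<lambda>(\<omega>, s). lam (F \<omega> s) * exp (- kap (F \<omega> s) * (LINT r:{s..t}|lborel. mu (F \<omega> r))))
    \<in> borel_measurable (N \<Otimes>\<^sub>M lborel)"
proof -
  have [measurable]: "(\<lambda>x. F (fst x) (snd x)) \<in> N \<Otimes>\<^sub>M lborel \<rightarrow>\<^sub>M borel"
    using F by (simp add: case_prod_beta')
  have "(\<lambda>(\<omega>, s). LINT r:{s..t}|lborel. mu (F \<omega> r)) \<in> borel_measurable (N \<Otimes>\<^sub>M lborel)"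
    using borel_measurable_set_integral_Icc_param[of "\<lambda>x. mu (F (fst x) (snd x))"] by simp
  then have [measurable]: "(\<lambda>x. LINT r:{snd x..t}|lborel. mu (F (fst x) r)) \<in> borel_measurable (N \<Otimes>\<^sub>M lborel)"
    by (simp add: case_prod_beta')
  show ?thesis unfolding case_prod_beta' by measurable
qed

lemma borel_measurable_phi_lebesgue:
  fixes F :: "'a \<Rightarrow> real \<Rightarrow> 'e::topological_space" and lam kap mu :: "'e \<Rightarrow> real"
  assumes "(\<lambda>(\<omega>, s). F \<omega> s) \<in> N \<Otimes>\<^sub>M lborel \<rightarrow>\<^sub>M borel"
    and "lam \<in> borel_measurable borel" "kap \<in> borel_measurable borel" "mu \<in> borel_measurable borel"
  shows "(\<lambda>\<omega>. phi_lebesgue lam kap mu t (F \<omega>)) \<in> borel_measurable N"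
proof -
  note [measurable] = borel_measurable_phi_integrand_pair[OF assms, of t]
  have "(\<lambda>(\<omega>, s). indicator {0..t} s *
      (lam (F \<omega> s) * exp (- kap (F \<omega> s) * (LINT r:{s..t}|lborel. mu (F \<omega> r)))))
    \<in> borel_measurable (N \<Otimes>\<^sub>M lborel)"
    by measurable
  from lborel.borel_measurable_lebesgue_integral[OF this] show ?thesis
    by (simp add: phi_lebesgue_def set_lebesgue_integral_def)
qed

lemma borel_measurable_phi_integrand:
  fixes f :: "real \<Rightarrow> 'e::topological_space" and lam kap mu :: "'e \<Rightarrow> real"
  assumes "f \<in> lborel \<rightarrow>\<^sub>M borel"
    and "lam \<in> borel_measurable borel" "kap \<in> borel_measurable borel" "mu \<in> borel_measurable borel"
  shows "(\<lambda>s. lam (f s) * exp (- kap (f s) * (LINT r:{s..t}|lborel. mu (f r)))) \<in> borel_measurable lborel"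
proof -
  have "(\<lambda>(\<omega>::unit, s). f s) \<in> count_space UNIV \<Otimes>\<^sub>M lborel \<rightarrow>\<^sub>M borel"
    using assms(1) by (simp add: case_prod_beta')
  from measurable_Pair2[OF borel_measurable_phi_integrand_pair[OF this assms(2-4)], of "()"] show ?thesis
    by simp
qed

lemma phi_eq_phi_lebesgue:
  fixes f :: "real \<Rightarrow> 'e::topological_space" and lam kap mu :: "'e \<Rightarrow> real"
  assumes f: "f \<in> lborel \<rightarrow>\<^sub>M borel"
    and meas: "lam \<in> borel_measurable borel" "kap \<in> borel_measurable borel" "mu \<in> borel_measurable borel"
    and lam0: "\<And>x. lam x \<ge> 0" and mu0: "\<And>x. mu x \<ge> 0"
  shows "phi lam kap mu t f = phi_lebesgue lam kap mu t f"
proof -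
  have "integral {s..t} (\<lambda>r. mu (f r)) = (LINT r:{s..t}|lborel. mu (f r))" for s
    using f meas(3)
    by (intro integral_eq_set_lebesgue_integral_nonneg) (simp_all add: mu0 set_borel_measurable_def)
  then have "phi lam kap mu t f =
      integral {0..t} (\<lambda>s. lam (f s) * exp (- kap (f s) * (LINT r:{s..t}|lborel. mu (f r))))"
    by (simp add: phi_def)
  also have "\<dots> = phi_lebesgue lam kap mu t f"
    unfolding phi_lebesgue_def using borel_measurable_phi_integrand[OF f meas, of t]
    by (intro integral_eq_set_lebesgue_integral_nonneg) (simp_all add: lam0 set_borel_measurable_def)
  finally show ?thesis .
qed

lemma phi_eq_phi_lebesgue_cadlag:
  fixes f :: "real \<Rightarrow> 'e::metric_space" and lam kap mu :: "'e \<Rightarrow> real"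
  assumes "cadlag f"
    and cont: "continuous_on UNIV lam" "continuous_on UNIV kap" "continuous_on UNIV mu"
    and "\<And>x. lam x \<ge> 0" "\<And>x. mu x \<ge> 0"
  shows "phi lam kap mu t f = phi_lebesgue lam kap mu t (\<lambda>s. f (max 0 s))"
proof -
  have "phi lam kap mu t f = phi lam kap mu t (\<lambda>s. f (max 0 s))"
    by (rule phi_cong) simp
  also have "\<dots> = phi_lebesgue lam kap mu t (\<lambda>s. f (max 0 s))"
    using cont by (intro phi_eq_phi_lebesgue cadlag_borel_measurable borel_measurable_continuous_onI assms)
  finally show ?thesis .
qed

lemma phi_lebesgue_tendsto:
  fixes f :: "nat \<Rightarrow> real \<Rightarrow> 'e::metric_space" and lam kap mu :: "'e \<Rightarrow> real"
  assumes meas: "\<And>k. f k \<in> lborel \<rightarrow>\<^sub>M borel" "g \<in> lborel \<rightarrow>\<^sub>M borel"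
    and cont: "continuous_on UNIV lam" "continuous_on UNIV kap" "continuous_on UNIV mu"
    and kap0: "\<And>x. kap x \<ge> 0" and mu0: "\<And>x. mu x \<ge> 0"
    and bound: "\<And>k s. s \<in> {0..t} \<Longrightarrow> \<bar>lam (f k s)\<bar> \<le> B \<and> mu (f k s) \<le> B"
    and lim: "AE s in lborel. s \<in> {0..t} \<longrightarrow> (\<lambda>k. f k s) \<longlonglongrightarrow> g s"
  shows "(\<lambda>k. phi_lebesgue lam kap mu t (f k)) \<longlonglongrightarrow> phi_lebesgue lam kap mu t g"
proof -
  have borel: "lam \<in> borel_measurable borel" "kap \<in> borel_measurable borel" "mu \<in> borel_measurable borel"
    using cont by (auto intro: borel_measurable_continuous_onI)
  have lim_comp: "AE s in lborel. s \<in> {0..t} \<longrightarrow> (\<lambda>k. u (f k s)) \<longlonglongrightarrow> u (g s)"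
    if "continuous_on UNIV u" for u :: "'e \<Rightarrow> real"
    using lim by eventually_elim (auto intro: continuous_on_tendsto_compose[OF that])
  have inner: "(\<lambda>k. LINT r:{s..t}|lborel. mu (f k r)) \<longlonglongrightarrow> (LINT r:{s..t}|lborel. mu (g r))"
    if "s \<in> {0..t}" for s
  proof (rule set_integral_bounded_convergence[where B=B])
    show "\<And>k r. r \<in> {s..t} \<Longrightarrow> \<bar>mu (f k r)\<bar> \<le> B"
      using that bound mu0 by fastforce
    show "AE r in lborel. r \<in> {s..t} \<longrightarrow> (\<lambda>k. mu (f k r)) \<longlonglongrightarrow> mu (g r)"
      using lim_comp[OF cont(3)] by eventually_elim (use that in auto)
  qed (use meas borel in \<open>auto simp: set_borel_measurable_def emeasure_lborel_Icc_eq\<close>)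
  have exp_le_1: "exp (- kap (f k s) * (LINT r:{s..t}|lborel. mu (f k r))) \<le> 1" for k s
  proof -
    have "0 \<le> (LINT r:{s..t}|lborel. mu (f k r))"
      unfolding set_lebesgue_integral_def by (rule integral_nonneg_AE) (simp add: mu0)
    then show ?thesis using kap0[of "f k s"] by simp
  qed
  show ?thesis
    unfolding phi_lebesgue_def
  proof (rule set_integral_bounded_convergence[where B=B])
    show "\<bar>lam (f k s) * exp (- kap (f k s) * (LINT r:{s..t}|lborel. mu (f k r)))\<bar> \<le> B"
      if "s \<in> {0..t}" for k s
    proof -
      have "\<bar>lam (f k s)\<bar> * exp (- kap (f k s) * (LINT r:{s..t}|lborel. mu (f k r))) \<le> B * 1"
        using bound[OF that, of k] exp_le_1[of k s] by (intro mult_mono) auto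
      then show ?thesis by (simp add: abs_mult)
    qed
    show "AE s in lborel. s \<in> {0..t} \<longrightarrow>
      (\<lambda>k. lam (f k s) * exp (- kap (f k s) * (LINT r:{s..t}|lborel. mu (f k r))))
        \<longlonglongrightarrow> lam (g s) * exp (- kap (g s) * (LINT r:{s..t}|lborel. mu (g r)))"
      using lim_comp[OF cont(1)] lim_comp[OF cont(2)]
      by eventually_elim (auto intro!: tendsto_mult tendsto_exp tendsto_minus inner)
  qed (use borel_measurable_phi_integrand[OF _ borel] meas in \<open>auto simp: set_borel_measurable_def emeasure_lborel_Icc_eq\<close>)
qed

lemma phi_tendsto:
  fixes f :: "nat \<Rightarrow> real \<Rightarrow> 'e::metric_space" and lam kap mu :: "'e \<Rightarrow> real"
  assumes cad: "\<And>k. cadlag (f k)" "cadlag g"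
    and cont: "continuous_on UNIV lam" "continuous_on UNIV kap" "continuous_on UNIV mu"
    and nonneg: "\<And>x. lam x \<ge> 0" "\<And>x. kap x \<ge> 0" "\<And>x. mu x \<ge> 0"
    and bound: "\<And>k s. s \<in> {0..t} \<Longrightarrow> lam (f k s) \<le> B \<and> mu (f k s) \<le> B"
    and lim: "AE s in lborel. s \<in> {0..t} \<longrightarrow> (\<lambda>k. f k s) \<longlonglongrightarrow> g s"
  shows "(\<lambda>k. phi lam kap mu t (f k)) \<longlonglongrightarrow> phi lam kap mu t g"
proof -
  have "(\<lambda>k. phi_lebesgue lam kap mu t (\<lambda>s. f k (max 0 s)))
      \<longlonglongrightarrow> phi_lebesgue lam kap mu t (\<lambda>s. g (max 0 s))"
  proof (rule phi_lebesgue_tendsto[OF cadlag_borel_measurable cadlag_borel_measurable cont nonneg(2,3)])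
    show "\<bar>lam (f k (max 0 s))\<bar> \<le> B \<and> mu (f k (max 0 s)) \<le> B" if "s \<in> {0..t}" for k s
      using that bound[of s k] nonneg(1)[of "f k s"] by simp
    show "AE s in lborel. s \<in> {0..t} \<longrightarrow> (\<lambda>k. f k (max 0 s)) \<longlonglongrightarrow> g (max 0 s)"
      using lim by eventually_elim simp
  qed (use cad in auto)
  then show ?thesis
    using cad by (simp add: phi_eq_phi_lebesgue_cadlag[OF _ cont nonneg(1,3)])
qed

lemma borel_measurable_phi_cadlag_process:
  fixes J :: "'a \<Rightarrow> real \<Rightarrow> 'e::metric_space" and lam kap mu :: "'e \<Rightarrow> real"
  assumes cont: "continuous_on UNIV lam" "continuous_on UNIV kap" "continuous_on UNIV mu"
    and nonneg: "\<And>x. lam x \<ge> 0" "\<And>x. mu x \<ge> 0"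
    and meas: "\<And>s. s \<ge> 0 \<Longrightarrow> (\<lambda>\<omega>. J \<omega> s) \<in> M \<rightarrow>\<^sub>M borel"
    and cad: "\<And>\<omega>. \<omega> \<in> space M \<Longrightarrow> cadlag (J \<omega>)"
  shows "(\<lambda>\<omega>. phi lam kap mu t (J \<omega>)) \<in> borel_measurable M"
proof -
  have "(\<lambda>\<omega>. phi_lebesgue lam kap mu t (\<lambda>s. J \<omega> (max 0 s))) \<in> borel_measurable M"
    using measurable_cadlag_process[OF cad meas] cont
    by (intro borel_measurable_phi_lebesgue borel_measurable_continuous_onI) auto
  then show ?thesis
    by (rule measurable_cong[THEN iffD1, rotated]) (simp add: phi_eq_phi_lebesgue_cadlag[OF cad cont nonneg])
qed

lemma phi_cadlag_in_closure_step_funs: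
  fixes f :: "real \<Rightarrow> 'e::metric_space" and lam kap mu :: "'e \<Rightarrow> real"
  assumes cad: "cadlag f"
    and cont: "continuous_on UNIV lam" "continuous_on UNIV kap" "continuous_on UNIV mu"
    and nonneg: "\<And>x. lam x \<ge> 0" "\<And>x. kap x \<ge> 0" "\<And>x. mu x \<ge> 0"
    and "t \<ge> 0"
  shows "phi lam kap mu t f \<in> closure (phi lam kap mu t ` step_funs)"
proof -
  define h where "h m s = f (min t (dyadic_up m s))" for m s
  have h_step: "h m \<in> step_funs" for m
  proof -
    define F where "F i = f (min t ((of_int i + 1) / 2^m))" for i
    define N where "N = nat \<lceil>t * 2^m\<rceil>"
    have "t * 2^m \<le> real N" unfolding N_def by (rule real_nat_ceiling_ge)
    then have "F i = F (int N)" if "i \<ge> int N" for i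
    proof -
      have "t * 2^m \<le> of_int i" using that \<open>t * 2^m \<le> real N\<close> by linarith
      then have "t \<le> (of_int i + 1) / 2^m" "t \<le> (of_int (int N) + 1) / 2^m"
        using \<open>t * 2^m \<le> real N\<close> by (simp_all add: field_simps)
      then show ?thesis by (simp add: F_def)
    qed
    from floor_comp_in_step_funs[of "2^m" _ F, OF _ this] show ?thesis
      by (simp add: h_def[abs_def] F_def dyadic_up_def)
  qed
  then have h_cadlag: "cadlag (h m)" for m
    by (simp add: step_funs_def)
  have h_arg: "min t (dyadic_up m s) \<in> {s..t}" if "s \<in> {0..t}" for m s
    using that dyadic_up_bounds(1)[of s m] by auto
  obtain Bl Bm where Bl: "\<And>s. s \<in> {0..t} \<Longrightarrow> \<bar>lam (f s)\<bar> \<le> Bl"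
    and Bm: "\<And>s. s \<in> {0..t} \<Longrightarrow> \<bar>mu (f s)\<bar> \<le> Bm"
    using cadlag_bound_on_Icc[OF cont(1) cad] cadlag_bound_on_Icc[OF cont(3) cad] by metis
  have "(\<lambda>m. phi lam kap mu t (h m)) \<longlonglongrightarrow> phi lam kap mu t f"
  proof (rule phi_tendsto[OF h_cadlag cad cont nonneg, where B="max Bl Bm"])
    show "lam (h m s) \<le> max Bl Bm \<and> mu (h m s) \<le> max Bl Bm" if "s \<in> {0..t}" for m s
      using Bl[of "min t (dyadic_up m s)"] Bm[of "min t (dyadic_up m s)"] h_arg[OF that, of m] that
      by (auto simp: h_def)
    have "(\<lambda>m. h m s) \<longlonglongrightarrow> f s" if "s \<in> {0..t}" for s
      unfolding h_def
    proof (rule cadlag_tendsto_from_right[OF cad])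
      show "(\<lambda>m. min t (dyadic_up m s)) \<longlonglongrightarrow> s"
        using tendsto_min[OF tendsto_const dyadic_up_tendsto, of t s] that by (simp add: min_absorb2)
    qed (use that h_arg in auto)
    then show "AE s in lborel. s \<in> {0..t} \<longrightarrow> (\<lambda>m. h m s) \<longlonglongrightarrow> f s"
      by simp
  qed
  with h_step show ?thesis
    unfolding closure_sequential by (metis image_eqI)
qed

lemma continuous_phi_splice:
  fixes g :: "real \<Rightarrow> 'e::metric_space" and lam kap mu :: "'e \<Rightarrow> real"
  assumes cad: "cadlag g"
    and cont: "continuous_on UNIV lam" "continuous_on UNIV kap" "continuous_on UNIV mu"
    and nonneg: "\<And>x. lam x \<ge> 0" "\<And>x. kap x \<ge> 0" "\<And>x. mu x \<ge> 0"
  shows "continuous_on UNIV (\<lambda>u. phi lam kap mu t (\<lambda>s. if s < u then g s else e))"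
proof (rule continuous_on_sequentiallyI)
  fix x :: "nat \<Rightarrow> real" and a
  assume "x \<longlonglongrightarrow> a"
  obtain Bl Bm where Bl: "\<And>s. s \<in> {0..t} \<Longrightarrow> \<bar>lam (g s)\<bar> \<le> Bl"
    and Bm: "\<And>s. s \<in> {0..t} \<Longrightarrow> \<bar>mu (g s)\<bar> \<le> Bm"
    using cadlag_bound_on_Icc[OF cont(1) cad] cadlag_bound_on_Icc[OF cont(3) cad] by metis
  show "(\<lambda>k. phi lam kap mu t (\<lambda>s. if s < x k then g s else e))
      \<longlonglongrightarrow> phi lam kap mu t (\<lambda>s. if s < a then g s else e)"
  proof (rule phi_tendsto[OF cadlag_splice[OF cad] cadlag_splice[OF cad] cont nonneg,
        where B="max (max Bl Bm) (max (lam e) (mu e))"])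
    show "lam (if s < x k then g s else e) \<le> max (max Bl Bm) (max (lam e) (mu e)) \<and>
        mu (if s < x k then g s else e) \<le> max (max Bl Bm) (max (lam e) (mu e))"
      if "s \<in> {0..t}" for k s
      using Bl[OF that] Bm[OF that] by auto
    have eventually_eq: "\<forall>\<^sub>F k in sequentially. (if s < x k then g s else e) = (if s < a then g s else e)"
      if "s \<noteq> a" for s
    proof (cases "s < a")
      case True
      with \<open>x \<longlonglongrightarrow> a\<close> have "\<forall>\<^sub>F k in sequentially. s < x k" by (simp add: order_tendstoD(1))
      then show ?thesis by eventually_elim (use True in auto)
    next
      case False
      with that \<open>x \<longlonglongrightarrow> a\<close> have "\<forall>\<^sub>F k in sequentially. x k < s" by (simp add: order_tendstoD(2))
      then show ?thesis by eventually_elim (use False in auto)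
    qed
    show "AE s in lborel. s \<in> {0..t} \<longrightarrow>
        (\<lambda>k. if s < x k then g s else e) \<longlonglongrightarrow> (if s < a then g s else e)"
      using AE_lborel_singleton[of a] by eventually_elim (simp add: tendsto_eventually eventually_eq)
  qed
qed

lemma connected_phi_cadlag:
  fixes lam kap mu :: "'e::metric_space \<Rightarrow> real"
  assumes cont: "continuous_on UNIV lam" "continuous_on UNIV kap" "continuous_on UNIV mu"
    and nonneg: "\<And>x. lam x \<ge> 0" "\<And>x. kap x \<ge> 0" "\<And>x. mu x \<ge> 0"
  shows "connected (phi lam kap mu t ` {f. cadlag f})"
proof -
  fix e :: 'e
  define path where "path g = range (\<lambda>u. phi lam kap mu t (\<lambda>s. if s < u then g s else e))" for g
  have "phi lam kap mu t ` {f. cadlag f} = (\<Union>g\<in>{f. cadlag f}. path g)"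
  proof (intro equalityI subsetI)
    fix y assume "y \<in> phi lam kap mu t ` {f. cadlag f}"
    then obtain g where "cadlag g" "y = phi lam kap mu t g" by blast
    moreover have "phi lam kap mu t g = phi lam kap mu t (\<lambda>s. if s < t + 1 then g s else e)"
      by (rule phi_cong) simp
    ultimately show "y \<in> (\<Union>g\<in>{f. cadlag f}. path g)" by (auto simp: path_def)
  qed (auto simp: path_def intro: cadlag_splice)
  also have "connected \<dots>"
  proof (rule connected_Union)
    show "connected S" if "S \<in> path ` {f. cadlag f}" for S
      using that connected_continuous_image[OF continuous_phi_splice[OF _ cont nonneg] connected_UNIV]
      by (auto simp: path_def)
    have "phi lam kap mu t (\<lambda>_. e) = phi lam kap mu t (\<lambda>s. if s < 0 then g s else e)" if "cadlag g" for g
      by (rule phi_cong) simp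
    then have "phi lam kap mu t (\<lambda>_. e) \<in> \<Inter>(path ` {f. cadlag f})"
      by (auto simp: path_def)
    then show "\<Inter>(path ` {f. cadlag f}) \<noteq> {}" by blast
  qed
  finally show ?thesis .
qed

theorem lemma5:
  fixes M :: "'w measure"
    and lam kap mu :: "'e::metric_space \<Rightarrow> real"
    and t :: real
    and J :: "'w \<Rightarrow> real \<Rightarrow> 'e"
    and Js :: "nat \<Rightarrow> 'w \<Rightarrow> real \<Rightarrow> 'e"
  assumes "prob_space M"
    and "continuous_on UNIV lam" "continuous_on UNIV kap" "continuous_on UNIV mu"
    and "\<And>x. lam x \<ge> 0" "\<And>x. kap x \<ge> 0" "\<And>x. mu x \<ge> 0"
    and "t \<ge> 0"
    and "\<And>s. s \<ge> 0 \<Longrightarrow> (\<lambda>\<omega>. J \<omega> s) \<in> measurable M borel"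
    and "\<And>\<omega>. \<omega> \<in> space M \<Longrightarrow> cadlag (J \<omega>)"
    and "\<And>n. Js n = J"
    and "phi lam kap mu t ` step_funs \<subseteq> Rset M lam kap mu t Js"
  shows "closed_interval (Rset M lam kap mu t Js)"
proof -
  note cont = assms(2-4) and nonneg = assms(5-7)
  let ?R = "Rset M lam kap mu t Js"
  let ?S = "phi lam kap mu t ` step_funs"
  let ?C = "phi lam kap mu t ` {f. cadlag f}"
  let ?X = "\<lambda>\<omega>. phi lam kap mu t (J \<omega>)"
  have R: "?R = {0..} \<inter> law_support M ?X"
    unfolding Rset_def law_support_def assms(11) by auto
  have "closed (law_support M ?X)"
    using assms(1) borel_measurable_phi_cadlag_process[OF cont nonneg(1,3) assms(9,10)]
    by (intro closed_law_support) (simp_all add: prob_space_def)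
  then have closed_R: "closed ?R" unfolding R by (intro closed_Int) auto
  have "?R \<subseteq> closure ?C"
    using law_support_subset_closure_range[of M ?X] closure_mono[of "?X ` space M" ?C] assms(10)
    unfolding R by blast
  moreover have "closure ?C \<subseteq> ?R"
  proof -
    have "?C \<subseteq> closure ?S"
      using phi_cadlag_in_closure_step_funs[OF _ cont nonneg assms(8)] by blast
    then have "closure ?C \<subseteq> closure ?S" by (simp add: closure_minimal)
    also have "\<dots> \<subseteq> ?R" using assms(12) closed_R by (rule closure_minimal)
    finally show ?thesis .
  qed
  ultimately have "?R = closure ?C" by blast
  moreover have "connected (closure ?C)"
    using connected_phi_cadlag[OF cont nonneg] by (rule connected_imp_connected_closure)
  moreover have "(\<lambda>_. e) \<in> step_funs" for e :: 'e
    using floor_comp_in_step_funs[of 1 0 "\<lambda>_. e"] by simp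
  then have "?R \<noteq> {}" using assms(12) by blast
  ultimately show ?thesis
    unfolding closed_interval_def using closed_R is_interval_connected_1 by metis
qed

end
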